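(* Let $k,m\in\mathbb{N}$ with $m<k\le 2m$, $k$ even, and $\gcd(2k+1,2(2m+1))=1$; let $a>0$ satisfy $\frac{1}{4km+3k+m+1}\le\frac{a}{2k+1}\le\frac{1}{4km+k+3m+1}$. For $s=0,\dots,4m+1$, $n=0,\dots,2k$ define $X_{sn}=\frac{s}{2(2m+1)}-\frac{n}{2k+1}$ and $\Phi_{sn}(0,0)=\sum_{l\in\mathbb{Z}}Q_2\big(2a(2m+1)(l+X_{sn})\big)$ with $Q_2(x)=(1-|x|)\chi_{[-1,1]}(x)$. Let $A$ be the $2m\times k$ matrix with entries $A_{sn}=\Phi_{sn}(0,0)-\Phi_{s,2k+1-n}(0,0)$, $s=1,\dots,2m$, $n=1,\dots,k$. Then $\operatorname{rank}(A)\le k-1$. *)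

theory Defs
  imports "HOL-Analysis.Infinite_Sum" "Jordan_Normal_Form.DL_Rank"
begin

definition Q2 :: "real \<Rightarrow> real" where
  "Q2 x = (if \<bar>x\<bar> \<le> 1 then 1 - \<bar>x\<bar> else 0)"

definition Xsn :: "nat \<Rightarrow> nat \<Rightarrow> nat \<Rightarrow> nat \<Rightarrow> real" where
  "Xsn k m s n = real s / (2 * (2 * real m + 1)) - real n / (2 * real k + 1)"

definition Phi00 :: "nat \<Rightarrow> nat \<Rightarrow> real \<Rightarrow> nat \<Rightarrow> nat \<Rightarrow> real" where
  "Phi00 k m a s n = (\<Sum>\<^sub>\<infinity>l::int. Q2 (2 * a * (2 * real m + 1) * (real_of_int l + Xsn k m s n)))"

text \<open>The 2m x k matrix A with A_{sn} = Phi_{sn} - Phi_{s,2k+1-n}, s=1..2m, n=1..k,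
  stored 0-based: entry (i,j) is A_{i+1,j+1}.\<close>
definition Amat :: "nat \<Rightarrow> nat \<Rightarrow> real \<Rightarrow> real mat" where
  "Amat k m a = mat (2 * m) k (\<lambda>(i, j). Phi00 k m a (i + 1) (j + 1) - Phi00 k m a (i + 1) (2 * k + 1 - (j + 1)))"

end

theory Submission
  imports Defs
begin

(* Write X_sn = x / (2N) with N = (2k+1)(2m+1) and the integer x = s(2k+1) - 2n(2m+1); the entry
   A_sn is Phi(x) - Phi(x') with x' = s(2k+1) + 2n(2m+1), Phi being 1-periodic in X_sn.  Because the
   scale c = 2a(2m+1) is at least 1, only two terms of the series for Phi survive, and the bounds on a
   say exactly that Phi(x) = 1 - c dist(x/2N, Z) while x stays at distance at least d = k - m from
   both 0 and N modulo 2N; on such x the sum Phi(x) + Phi(N - x) is the constant 2 - c/2.  Passing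
   from row s to row 2m+1-s replaces x, x' by N - x', N - x, so the two rows agree unless some entry
   of row s leaves the linear regime.  That forces s(2k+1) = +-i (mod 2m+1) for some 0 < i < d, and
   by coprimality distinct rows s <= m need distinct i.  Hence the columns of A lie in the span of the
   m vectors e_s + e_(2m+1-s) and at most k - m - 1 unit vectors. *)

section \<open>Rank of matrices with mirror-symmetric rows\<close>

lemma (in vec_space) rank_le_card_span:
  assumes A: "A \<in> carrier_mat n nc" and S: "S \<subseteq> carrier_vec n" "finite S"
    and cols: "set (cols A) \<subseteq> span S"
  shows "rank A \<le> card S"
proof -
  have vs: "vectorspace class_ring (vs (span S))"
    using span_is_subspace[THEN subspace_is_vs, of S] S by auto
  have sub: "submodule class_ring (span S) V" using S by (simp add: span_is_submodule)
  have cols_subspace: "subspace class_ring (span (set (cols A))) (vs (span S))"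
    using vectorspace.span_is_subspace[OF vs, of "set (cols A)"] span_li_not_depend(1)[OF cols sub] cols
    by auto
  have "S \<subseteq> span S" using S in_own_span by auto
  then have "LinearCombinations.module.span class_ring (vs (span S)) S = carrier (vs (span S))"
    using span_li_not_depend(1)[OF _ sub] by simp
  then have "vectorspace.dim class_ring (vs (span S)) \<le> card S"
    using vectorspace.gen_ge_dim[OF vs S(2)] \<open>S \<subseteq> span S\<close> by simp
  moreover have "vectorspace.fin_dim class_ring (vs (span S))"
    "vectorspace.fin_dim class_ring (vs (span S)\<lparr>carrier := span (set (cols A))\<rparr>)"
    using fin_dim_span fin_dim_span_cols A S by auto
  ultimately show ?thesis
    unfolding rank_def using vectorspace.subspace_dim[OF vs cols_subspace] by simp
qed

lemma (in vec_space) mirror_symmetric_in_span: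
  assumes n: "n = 2 * m" and B: "B \<subseteq> {..<m}" and y: "y \<in> carrier_vec n"
    and mirror: "\<And>i. i < m \<Longrightarrow> i \<notin> B \<Longrightarrow> y $ i = y $ (n - 1 - i)"
  shows "y \<in> span ((\<lambda>i. unit_vec n i + unit_vec n (n - 1 - i)) ` {..<m} \<union> unit_vec n ` B)"
    (is "_ \<in> span ?S")
proof -
  have S: "?S \<subseteq> carrier_vec n" by auto
  have sub: "submodule class_ring (span ?S) V" using S by (simp add: span_is_submodule)
  have add: "u + w \<in> span ?S" if "u \<in> span ?S" "w \<in> span ?S" for u w
    using span_add1[OF S that] by (simp add: module_vec_simps)
  have smult: "r \<cdot>\<^sub>v u \<in> span ?S" if "u \<in> span ?S" for r u
    using submodule.smult_closed[OF sub] that by (simp add: module_vec_simps class_ring_simps)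
  have gen: "u \<in> span ?S" if "u \<in> ?S" for u using that in_own_span[OF S] by auto
  define trunc where
    "trunc p = vec n (\<lambda>i. if i < p \<or> n - 1 - i < p then y $ i else 0)" for p
  have "trunc p \<in> span ?S" if "p \<le> m" for p
    using that
  proof (induction p)
    case 0
    have "trunc 0 = 0\<^sub>v n" unfolding trunc_def by auto
    then show ?case using submodule.zero_closed[OF sub] by (simp add: module_vec_simps)
  next
    case (Suc p)
    then have IH: "trunc p \<in> span ?S" and p: "p < m" by auto
    define pair :: "'a vec" where "pair = unit_vec n p + unit_vec n (n - 1 - p)"
    define defect :: "'a vec" where "defect = (y $ p - y $ (n - 1 - p)) \<cdot>\<^sub>v unit_vec n p"
    have "pair \<in> span ?S" unfolding pair_def using p by (intro gen) auto
    moreover have "defect \<in> span ?S"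
    proof (cases "p \<in> B")
      case True
      then show ?thesis unfolding defect_def by (intro smult gen) auto
    next
      case False
      then have "defect = 0\<^sub>v n" unfolding defect_def using mirror p by auto
      then show ?thesis using submodule.zero_closed[OF sub] by (simp add: module_vec_simps)
    qed
    moreover have "trunc (Suc p) = trunc p + (y $ (n - 1 - p) \<cdot>\<^sub>v pair + defect)"
    proof (rule eq_vecI)
      fix i assume "i < dim_vec (trunc p + (y $ (n - 1 - p) \<cdot>\<^sub>v pair + defect))"
      then have i: "i < n" by (simp add: trunc_def defect_def)
      have "n - 1 - i = p \<longleftrightarrow> i = n - 1 - p" "n - 1 - (n - 1 - p) = p" "\<not> n - 1 - p \<le> p"
        using i p n by linarith+
      then show "trunc (Suc p) $ i = (trunc p + (y $ (n - 1 - p) \<cdot>\<^sub>v pair + defect)) $ i"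
        using i unfolding trunc_def pair_def defect_def by (auto simp: unit_vec_def)
    qed (simp add: trunc_def pair_def defect_def)
    ultimately show ?case using IH add smult by simp
  qed
  moreover have "trunc m = y" unfolding trunc_def using y n by (intro eq_vecI) auto
  ultimately show ?thesis by auto
qed

lemma rank_le_mirror_rows:
  fixes A :: "'a::field mat"
  assumes A: "A \<in> carrier_mat (2 * m) nc" and B: "B \<subseteq> {..<m}"
    and mirror: "\<And>i j. i < m \<Longrightarrow> i \<notin> B \<Longrightarrow> j < nc \<Longrightarrow> A $$ (i, j) = A $$ (2 * m - 1 - i, j)"
  shows "vec_space.rank (2 * m) A \<le> m + card B"
proof -
  interpret vec_space "TYPE('a)" "2 * m" .
  define S :: "'a vec set" where
    "S = (\<lambda>i. unit_vec (2 * m) i + unit_vec (2 * m) (2 * m - 1 - i)) ` {..<m} \<union> unit_vec (2 * m) ` B"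
  have "set (cols A) \<subseteq> span S"
  proof
    fix v assume "v \<in> set (cols A)"
    then obtain j where j: "j < nc" and v: "v = col A j"
      using A by (metis cols_length cols_nth in_set_conv_nth carrier_matD(2))
    show "v \<in> span S"
      unfolding S_def v by (rule mirror_symmetric_in_span[OF refl B]) (use A j mirror in auto)
  qed
  then have "rank A \<le> card S"
    using B by (intro rank_le_card_span[OF A]) (auto simp: S_def intro: finite_subset)
  also have "card S \<le> card {..<m} + card B"
    unfolding S_def by (rule order_trans[OF card_Un_le add_mono[OF card_image_le card_image_le]])
      (use B in \<open>auto intro: finite_subset\<close>)
  finally show ?thesis by simp
qed

section \<open>The periodized tent function\<close>

lemma Q2_eq_0: "1 \<le> \<bar>x\<bar> \<Longrightarrow> Q2 x = 0"
  by (simp add: Q2_def)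

lemma Q2_minus [simp]: "Q2 (- x) = Q2 x"
  by (simp add: Q2_def)

definition periodized_Q2 :: "real \<Rightarrow> real \<Rightarrow> real" where
  "periodized_Q2 c t = (\<Sum>\<^sub>\<infinity>l::int. Q2 (c * (of_int l + t)))"

lemma periodized_Q2_add_of_int: "periodized_Q2 c (t + of_int j) = periodized_Q2 c t"
proof -
  have "bij_betw (\<lambda>l. l + j) UNIV (UNIV :: int set)"
    by (rule bij_betwI[where g = "\<lambda>l. l - j"]) auto
  then show ?thesis
    unfolding periodized_Q2_def
    using infsum_reindex_bij_betw[of "\<lambda>l. l + j" UNIV UNIV "\<lambda>l. Q2 (c * (of_int l + t))"]
    by (simp add: algebra_simps)
qed

lemma periodized_Q2_eq:
  assumes "1 \<le> c"
  shows "periodized_Q2 c t = Q2 (c * frac t) + Q2 (c * (1 - frac t))"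
proof -
  have shift: "of_int l + t = of_int (l + \<lfloor>t\<rfloor>) + frac t" for l
    by (simp add: frac_def)
  have "periodized_Q2 c t = (\<Sum>\<^sub>\<infinity>l\<in>{-\<lfloor>t\<rfloor>, -\<lfloor>t\<rfloor> - 1}. Q2 (c * (of_int l + t)))"
    unfolding periodized_Q2_def
  proof (rule infsum_cong_neutral)
    fix l assume "l \<in> UNIV - {-\<lfloor>t\<rfloor>, -\<lfloor>t\<rfloor> - 1}"
    then have "1 \<le> l + \<lfloor>t\<rfloor> \<or> l + \<lfloor>t\<rfloor> \<le> -2" by auto
    then have "1 \<le> \<bar>of_int l + t\<bar>"
      unfolding shift using frac_ge_0[of t] frac_lt_1[of t] by linarith
    then have "1 \<le> \<bar>c * (of_int l + t)\<bar>"
      using assms by (simp add: abs_mult) (metis mult_mono' mult_1 zero_le_one)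
    then show "Q2 (c * (of_int l + t)) = 0" by (rule Q2_eq_0)
  qed auto
  also have "\<dots> = Q2 (c * frac t) + Q2 (c * (frac t - 1))"
    by (simp add: shift)
  also have "c * (frac t - 1) = - (c * (1 - frac t))"
    by (simp add: algebra_simps)
  finally show ?thesis by simp
qed

lemma frac_of_int_divide:
  assumes "0 < M"
  shows "frac (of_int x / of_int M) = of_int (x mod M) / (of_int M :: real)"
proof -
  have "of_int x / of_int M = of_int (x div M) + of_int (x mod M) / (of_int M :: real)"
    using assms by (simp add: field_simps flip: of_int_mult of_int_add)
  moreover have "of_int (x mod M) / (of_int M :: real) \<in> {0..<1}"
    using assms by simp
  ultimately show ?thesis by simp
qed

definition mod_dist :: "int \<Rightarrow> int \<Rightarrow> int" where
  "mod_dist M x = min (x mod M) (M - x mod M)"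

lemma mod_dist_bounds:
  assumes "0 < M"
  shows "0 \<le> mod_dist M x" "2 * mod_dist M x \<le> M"
  using pos_mod_sign[OF assms, of x] pos_mod_bound[OF assms, of x] by (auto simp: mod_dist_def min_def)

lemma mod_dist_reflect:
  assumes N: "0 < N"
  shows "mod_dist (2 * N) (N - x) = N - mod_dist (2 * N) x"
proof -
  define r where "r = x mod (2 * N)"
  have r: "0 \<le> r" "r < 2 * N" using N by (simp_all add: r_def)
  have "(N - x) mod (2 * N) = (N - r) mod (2 * N)"
    by (simp add: r_def mod_diff_right_eq)
  also have "\<dots> = (if r \<le> N then N - r else 3 * N - r)"
  proof (cases "r \<le> N")
    case True
    then show ?thesis using r by simp
  next
    case False
    have "(N - r) mod (2 * N) = (N - r + 2 * N) mod (2 * N)" by (simp only: mod_add_self2)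
    also have "\<dots> = N - r + 2 * N" using False r by (intro mod_pos_pos_trivial) auto
    finally show ?thesis using False by simp
  qed
  finally show ?thesis
    unfolding mod_dist_def r_def[symmetric] using r by auto
qed

lemma dvd_pm_mod_dist:
  fixes Mm M x y :: int
  assumes M: "Mm dvd M" and xy: "Mm dvd x - y"
  shows "Mm dvd y - mod_dist M x \<or> Mm dvd y + mod_dist M x"
proof -
  have div_mod: "x = M * (x div M) + x mod M" by simp
  consider "mod_dist M x = x mod M" | "mod_dist M x = M - x mod M"
    unfolding mod_dist_def by linarith
  then show ?thesis
  proof cases
    case 1
    then have "y - mod_dist M x = M * (x div M) - (x - y)" using div_mod by linarith
    moreover have "Mm dvd M * (x div M) - (x - y)" by (rule dvd_diff) (simp_all add: M xy)
    ultimately show ?thesis by metis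
  next
    case 2
    then have "y + mod_dist M x = (M * (x div M) + M) - (x - y)" using div_mod by linarith
    moreover have "Mm dvd (M * (x div M) + M) - (x - y)" by (rule dvd_diff) (simp_all add: M xy)
    ultimately show ?thesis by metis
  qed
qed

lemma periodized_Q2_linear:
  assumes M: "0 < M"
    and near: "c * of_int (mod_dist M x) \<le> of_int M"
    and far: "of_int M \<le> c * of_int (M - mod_dist M x)"
  shows "periodized_Q2 c (of_int x / of_int M) = 1 - c * of_int (mod_dist M x) / of_int M"
proof -
  define D where "D = mod_dist M x"
  have D: "0 \<le> D" "2 * D \<le> M" using mod_dist_bounds[OF M] by (simp_all add: D_def)
  have "1 \<le> c"
  proof (rule ccontr)
    assume "\<not> 1 \<le> c"
    then have "c * of_int (M - D) < 1 * of_int (M - D)" using D M by (intro mult_strict_right_mono) auto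
    then show False using far D by (simp add: D_def)
  qed
  have frac: "frac (of_int x / of_int M :: real) = of_int (x mod M) / of_int M"
    by (rule frac_of_int_divide[OF M])
  have swap: "of_int (M - D) / of_int M = 1 - of_int D / (of_int M :: real)"
    using M by (simp add: field_simps)
  have "x mod M = D \<or> x mod M = M - D" unfolding D_def mod_dist_def by linarith
  then have "periodized_Q2 c (of_int x / of_int M) =
      Q2 (c * (of_int D / of_int M)) + Q2 (c * (1 - of_int D / of_int M))"
  proof
    assume "x mod M = M - D"
    then show ?thesis
      unfolding periodized_Q2_eq[OF \<open>1 \<le> c\<close>] frac \<open>x mod M = M - D\<close> swap by (simp add: add.commute)
  qed (simp add: periodized_Q2_eq[OF \<open>1 \<le> c\<close>] frac)
  also have "Q2 (c * (of_int D / of_int M)) = 1 - c * of_int D / of_int M"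
    using near \<open>1 \<le> c\<close> D M by (simp add: Q2_def D_def field_simps)
  also have "Q2 (c * (1 - of_int D / of_int M)) = 0"
    using far M by (intro Q2_eq_0) (simp add: D_def field_simps)
  finally show ?thesis by (simp add: D_def)
qed

definition central :: "int \<Rightarrow> int \<Rightarrow> int \<Rightarrow> bool" where
  "central N d x \<longleftrightarrow> d \<le> mod_dist (2 * N) x \<and> mod_dist (2 * N) x \<le> N - d"

lemma periodized_Q2_reflect:
  assumes N: "0 < N" and d: "0 \<le> d"
    and scale: "c * of_int (N - d) \<le> of_int (2 * N)" "of_int (2 * N) \<le> c * of_int (N + d)"
    and central: "central N d x"
  shows "periodized_Q2 c (of_int x / of_int (2 * N)) + periodized_Q2 c (of_int (N - x) / of_int (2 * N))
    = 2 - c / 2"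
proof -
  have "0 \<le> c" using scale(2) N d by (smt (verit) mult_nonpos_nonneg of_int_pos)
  have linear: "periodized_Q2 c (of_int y / of_int (2 * N))
      = 1 - c * of_int (mod_dist (2 * N) y) / of_int (2 * N)"
    if "mod_dist (2 * N) y \<le> N - d" for y
  proof (rule periodized_Q2_linear)
    have "c * of_int (mod_dist (2 * N) y) \<le> c * of_int (N - d)"
      using that \<open>0 \<le> c\<close> by (intro mult_left_mono) simp_all
    then show "c * of_int (mod_dist (2 * N) y) \<le> of_int (2 * N)" using scale(1) by linarith
    have "c * of_int (N + d) \<le> c * of_int (2 * N - mod_dist (2 * N) y)"
      using that \<open>0 \<le> c\<close> by (intro mult_left_mono) simp_all
    then show "of_int (2 * N) \<le> c * of_int (2 * N - mod_dist (2 * N) y)" using scale(2) by linarith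
  qed (use N in simp)
  have reflect: "mod_dist (2 * N) (N - x) = N - mod_dist (2 * N) x" by (rule mod_dist_reflect[OF N])
  have "periodized_Q2 c (of_int x / of_int (2 * N)) + periodized_Q2 c (of_int (N - x) / of_int (2 * N))
      = (1 - c * of_int (mod_dist (2 * N) x) / of_int (2 * N))
        + (1 - c * of_int (N - mod_dist (2 * N) x) / of_int (2 * N))"
    using linear[of x] linear[of "N - x"] central reflect by (simp add: central_def)
  also have "\<dots> = 2 - c * of_int N / of_int (2 * N)"
    by (simp add: field_simps)
  also have "\<dots> = 2 - c / 2"
    using N by simp
  finally show ?thesis .
qed

section \<open>Signed residues of multiples of a unit\<close>

lemma coprime_not_dvd_mult:
  fixes K Mm s :: int
  assumes "coprime K Mm" "s \<noteq> 0" "\<bar>s\<bar> < Mm"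
  shows "\<not> Mm dvd s * K"
proof
  assume "Mm dvd s * K"
  then have "Mm dvd s" using assms(1) by (simp add: coprime_commute coprime_dvd_mult_left_iff)
  then have "\<bar>Mm\<bar> \<le> \<bar>s\<bar>" using assms(2) by (rule dvd_imp_le_int[rotated])
  then show False using assms(3) by linarith
qed

lemma pm_residue_inj:
  fixes K Mm s1 s2 i :: int
  assumes cop: "coprime K Mm" and s: "0 < s1" "0 < s2" "s1 + s2 < Mm"
    and h1: "Mm dvd s1 * K - i \<or> Mm dvd s1 * K + i"
    and h2: "Mm dvd s2 * K - i \<or> Mm dvd s2 * K + i"
  shows "s1 = s2"
proof -
  have "Mm dvd (s1 - s2) * K \<or> Mm dvd (s1 + s2) * K"
    using h1 h2 by (smt (verit) dvd_add dvd_diff left_diff_distrib distrib_right)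
  moreover have "\<not> Mm dvd (s1 + s2) * K" using cop s by (intro coprime_not_dvd_mult) auto
  moreover have "\<not> Mm dvd (s1 - s2) * K" if "s1 \<noteq> s2"
    using cop s that by (intro coprime_not_dvd_mult) auto
  ultimately show ?thesis by blast
qed

lemma card_le_pm_residues:
  fixes K Mm d m :: int and S :: "int set"
  assumes cop: "coprime K Mm" and S: "S \<subseteq> {1..m}" and m: "2 * m < Mm"
    and hit: "\<And>s. s \<in> S \<Longrightarrow> \<exists>i. 0 \<le> i \<and> i < d \<and> (Mm dvd s * K - i \<or> Mm dvd s * K + i)"
  shows "card S \<le> nat (d - 1)"
proof -
  obtain f where f: "\<And>s. s \<in> S \<Longrightarrow> 0 \<le> f s \<and> f s < d \<and> (Mm dvd s * K - f s \<or> Mm dvd s * K + f s)"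
    using hit by metis
  have "f s \<noteq> 0" if "s \<in> S" for s
    using f[OF that] coprime_not_dvd_mult[OF cop, of s] \<open>s \<in> S\<close> S m by fastforce
  then have "f ` S \<subseteq> {1..d - 1}" using f by force
  moreover have "inj_on f S"
  proof (rule inj_onI)
    fix s1 s2 assume "s1 \<in> S" "s2 \<in> S" "f s1 = f s2"
    moreover have "s1 \<in> {1..m}" "s2 \<in> {1..m}" using S \<open>s1 \<in> S\<close> \<open>s2 \<in> S\<close> by auto
    ultimately show "s1 = s2" using f[of s1] f[of s2] m by (intro pm_residue_inj[OF cop]) auto
  qed
  ultimately have "card S \<le> card {1..d - 1}"
    by (metis card_image card_mono finite_atLeastAtMost_int)
  then show ?thesis by simp
qed

lemma not_central_residue:
  fixes Mm N d x y :: int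
  assumes N: "0 < N" "Mm dvd N" and xy: "Mm dvd x - y" and off: "\<not> central N d x"
  shows "\<exists>i. 0 \<le> i \<and> i < d \<and> (Mm dvd y - i \<or> Mm dvd y + i)"
proof -
  define D where "D = mod_dist (2 * N) x"
  have D: "0 \<le> D" "D \<le> N" using mod_dist_bounds[of "2 * N" x] N by (simp_all add: D_def)
  have pm: "Mm dvd y - D \<or> Mm dvd y + D"
    unfolding D_def using N(2) xy by (intro dvd_pm_mod_dist) auto
  show ?thesis
  proof (cases "D < d")
    case True
    then show ?thesis using pm D by blast
  next
    case False
    then have "N - D < d" using off by (simp add: central_def D_def)
    moreover have "Mm dvd y - (N - D) \<or> Mm dvd y + (N - D)"
      using pm N(2) by (smt (verit) dvd_add dvd_diff)
    ultimately show ?thesis using D by (intro exI[of _ "N - D"]) auto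
  qed
qed

definition denom :: "nat \<Rightarrow> nat \<Rightarrow> int" where
  "denom k m = (2 * int k + 1) * (2 * int m + 1)"

definition xnum :: "nat \<Rightarrow> nat \<Rightarrow> int \<Rightarrow> int \<Rightarrow> int" where
  "xnum k m s n = s * (2 * int k + 1) - 2 * n * (2 * int m + 1)"

lemma Xsn_eq_xnum: "Xsn k m s n = of_int (xnum k m (int s) (int n)) / of_int (2 * denom k m)"
  unfolding Xsn_def xnum_def denom_def by (simp add: field_simps)

lemma Phi00_eq_periodized_Q2:
  "Phi00 k m a s n = periodized_Q2 (2 * a * (2 * real m + 1)) (Xsn k m s n)"
  by (simp add: Phi00_def periodized_Q2_def)

lemma Amat_entry:
  assumes "i < 2 * m" "j < k"
  shows "Amat k m a $$ (i, j) =
    periodized_Q2 (2 * a * (2 * real m + 1))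
      (of_int (xnum k m (int i + 1) (int j + 1)) / of_int (2 * denom k m)) -
    periodized_Q2 (2 * a * (2 * real m + 1))
      (of_int (xnum k m (int i + 1) (- int j - 1)) / of_int (2 * denom k m))"
proof -
  define x where "x = xnum k m (int i + 1) (- int j - 1)"
  have "xnum k m (int (i + 1)) (int (2 * k + 1 - (j + 1))) = x - 2 * denom k m"
    using assms unfolding x_def xnum_def denom_def by (simp add: algebra_simps)
  then have "Xsn k m (i + 1) (2 * k + 1 - (j + 1)) = of_int (x - 2 * denom k m) / of_int (2 * denom k m)"
    unfolding Xsn_eq_xnum by (rule arg_cong)
  also have "\<dots> = of_int x / of_int (2 * denom k m) + of_int (-1)"
    by (simp add: denom_def diff_divide_distrib)
  finally have "Phi00 k m a (i + 1) (2 * k + 1 - (j + 1))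
      = periodized_Q2 (2 * a * (2 * real m + 1)) (of_int x / of_int (2 * denom k m))"
    by (simp only: Phi00_eq_periodized_Q2 periodized_Q2_add_of_int)
  moreover have "Xsn k m (i + 1) (j + 1) = of_int (xnum k m (int i + 1) (int j + 1)) / of_int (2 * denom k m)"
    by (simp add: Xsn_eq_xnum add.commute)
  ultimately show ?thesis
    using assms unfolding x_def by (simp add: Amat_def Phi00_eq_periodized_Q2)
qed

lemma scale_bounds:
  fixes k m :: nat and a :: real
  assumes lower: "1 / (4 * real k * real m + 3 * real k + real m + 1) \<le> a / (2 * real k + 1)"
    and upper: "a / (2 * real k + 1) \<le> 1 / (4 * real k * real m + real k + 3 * real m + 1)"
  shows "2 * a * (2 * real m + 1) * of_int (denom k m - (int k - int m)) \<le> of_int (2 * denom k m)"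
    and "of_int (2 * denom k m) \<le> 2 * a * (2 * real m + 1) * of_int (denom k m + (int k - int m))"
proof -
  have "0 \<le> real k * real m" by simp
  then have "0 < 4 * real k * real m + real k + 3 * real m + 1"
    and "0 < 4 * real k * real m + 3 * real k + real m + 1" by linarith+
  then have "a * (4 * real k * real m + real k + 3 * real m + 1) \<le> 2 * real k + 1"
    and "2 * real k + 1 \<le> a * (4 * real k * real m + 3 * real k + real m + 1)"
    using lower upper by (simp_all add: field_simps)
  note bounds = this
  have twoN: "of_int (2 * denom k m) = 2 * (2 * real m + 1) * (2 * real k + 1)"
    by (simp add: denom_def algebra_simps)
  have "2 * a * (2 * real m + 1) * of_int (denom k m - (int k - int m))
      = 2 * (2 * real m + 1) * (a * (4 * real k * real m + real k + 3 * real m + 1))"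
    by (simp add: denom_def algebra_simps)
  also have "\<dots> \<le> of_int (2 * denom k m)"
    unfolding twoN using bounds(1) by (intro mult_left_mono) simp_all
  finally show "2 * a * (2 * real m + 1) * of_int (denom k m - (int k - int m)) \<le> of_int (2 * denom k m)" .
  have "of_int (2 * denom k m) \<le> 2 * (2 * real m + 1) * (a * (4 * real k * real m + 3 * real k + real m + 1))"
    unfolding twoN using bounds(2) by (intro mult_left_mono) simp_all
  also have "\<dots> = 2 * a * (2 * real m + 1) * of_int (denom k m + (int k - int m))"
    by (simp add: denom_def algebra_simps)
  finally show "of_int (2 * denom k m) \<le> 2 * a * (2 * real m + 1) * of_int (denom k m + (int k - int m))" .
qed

definition bad_rows :: "nat \<Rightarrow> nat \<Rightarrow> nat set" where
  "bad_rows k m = {i. i < m \<and> (\<exists>j<k.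
      \<not> central (denom k m) (int k - int m) (xnum k m (int i + 1) (int j + 1)) \<or>
      \<not> central (denom k m) (int k - int m) (xnum k m (int i + 1) (- int j - 1)))}"

lemma Amat_mirror_row:
  assumes "m \<le> k"
    and scale: "2 * a * (2 * real m + 1) * of_int (denom k m - (int k - int m)) \<le> of_int (2 * denom k m)"
      "of_int (2 * denom k m) \<le> 2 * a * (2 * real m + 1) * of_int (denom k m + (int k - int m))"
    and i: "i < m" "i \<notin> bad_rows k m" and j: "j < k"
  shows "Amat k m a $$ (i, j) = Amat k m a $$ (2 * m - 1 - i, j)"
proof -
  define N where "N = denom k m"
  define P where "P x = periodized_Q2 (2 * a * (2 * real m + 1)) (of_int x / of_int (2 * N))" for x
  define x where "x = xnum k m (int i + 1) (int j + 1)"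
  define y where "y = xnum k m (int i + 1) (- int j - 1)"
  have "0 < N" by (simp add: N_def denom_def)
  have "central N (int k - int m) x" "central N (int k - int m) y"
    using i j by (auto simp: bad_rows_def N_def x_def y_def)
  then have reflect: "P x + P (N - x) = P y + P (N - y)"
    unfolding P_def using periodized_Q2_reflect[OF \<open>0 < N\<close> _ scale[folded N_def]] assms(1)
    by simp
  have mirror: "xnum k m (int (2 * m - 1 - i) + 1) (int j + 1) = N - y"
    "xnum k m (int (2 * m - 1 - i) + 1) (- int j - 1) = N - x"
    using i unfolding xnum_def N_def denom_def x_def y_def by (simp_all add: algebra_simps)
  have "Amat k m a $$ (i, j) = P x - P y"
    using i j by (simp add: Amat_entry P_def N_def x_def y_def)
  also have "\<dots> = P (N - y) - P (N - x)"
    using reflect by linarith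
  also have "\<dots> = Amat k m a $$ (2 * m - 1 - i, j)"
    using i j mirror by (simp add: Amat_entry P_def N_def)
  finally show ?thesis .
qed

lemma card_bad_rows:
  assumes "coprime (2 * k + 1) (2 * m + 1)"
  shows "card (bad_rows k m) \<le> k - m - 1"
proof -
  define K where "K = 2 * int k + 1"
  define Mm where "Mm = 2 * int m + 1"
  have "coprime (int (2 * k + 1)) (int (2 * m + 1))"
    using assms by (simp only: coprime_int_iff)
  then have cop: "coprime K Mm" by (simp add: K_def Mm_def add.commute)
  have N: "0 < denom k m" "Mm dvd denom k m" by (simp_all add: denom_def Mm_def)
  have res: "Mm dvd xnum k m s n - s * K" for s n
    by (rule dvdI[where k = "- 2 * n"]) (simp add: xnum_def K_def Mm_def algebra_simps)
  have "\<exists>i. 0 \<le> i \<and> i < int k - int m \<and> (Mm dvd s * K - i \<or> Mm dvd s * K + i)"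
    if "s \<in> (\<lambda>i. int i + 1) ` bad_rows k m" for s
    using that unfolding bad_rows_def by (auto intro: not_central_residue[OF N res])
  then have "card ((\<lambda>i. int i + 1) ` bad_rows k m) \<le> nat (int k - int m - 1)"
    by (intro card_le_pm_residues[OF cop, where m = "int m"]) (auto simp: bad_rows_def Mm_def)
  moreover have "inj_on (\<lambda>i. int i + 1) (bad_rows k m)" by (simp add: inj_on_def)
  ultimately show ?thesis by (simp add: card_image)
qed

theorem lemma3p14:
  fixes k m :: nat and a :: real
  assumes "m < k" and "k \<le> 2 * m" and "even k"
    and "gcd (2 * k + 1) (2 * (2 * m + 1)) = 1"
    and "a > 0"
    and "1 / (4 * real k * real m + 3 * real k + real m + 1) \<le> a / (2 * real k + 1)"
    and "a / (2 * real k + 1) \<le> 1 / (4 * real k * real m + real k + 3 * real m + 1)"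
  shows "vec_space.rank (2 * m) (Amat k m a) \<le> k - 1"
proof -
  have coprime: "coprime (2 * k + 1) (2 * m + 1)"
    using assms(4) by (metis coprime_iff_gcd_eq_1 coprime_mult_right_iff)
  note scale = scale_bounds[OF assms(6,7)]
  have "vec_space.rank (2 * m) (Amat k m a) \<le> m + card (bad_rows k m)"
  proof (rule rank_le_mirror_rows)
    show "Amat k m a \<in> carrier_mat (2 * m) k" by (simp add: Amat_def)
    show "bad_rows k m \<subseteq> {..<m}" by (auto simp: bad_rows_def)
  qed (use Amat_mirror_row[OF _ scale] assms(1) in simp)
  also have "\<dots> \<le> k - 1"
    using card_bad_rows[OF coprime] assms(1) by linarith
  finally show ?thesis .
qed

end
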